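(* Let $Q=\Diamond abcd$ be a convex quadrilateral with vertices $a,b,c,d$ in clockwise order, such that the diagonal $\overline{ac}$ is horizontal, $|ac|=1$, and $1$ is the diameter of $Q$. Let the smallest axis-parallel rectangle containing $Q$ have horizontal side length $1$ and vertical side length $W$ with $\frac{2}{\sqrt5}<W\le 1$, with $a$ on its left side, $b$ on its top side, $c$ on its right side and $d$ on its bottom side. Then there exists a triangle contained in $Q$ whose smallest side has length at least $\frac{\sqrt{1+5W^2}}{4}$. *)

theory Defs
  imports "HOL-Analysis.Analysis"
begin

definition cross2 :: "real \<times> real \<Rightarrow> real \<times> real \<Rightarrow> real" where
  "cross2 u v = fst u * snd v - snd u * fst v"

text \<open>a b c d are the vertices, in clockwise order, of a (strictly) convex quadrilateral:
  every consecutive triple makes a strict right turn.\<close>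

definition convex_quad_cw :: "real \<times> real \<Rightarrow> real \<times> real \<Rightarrow> real \<times> real \<Rightarrow> real \<times> real \<Rightarrow> bool" where
  "convex_quad_cw a b c d \<longleftrightarrow>
     cross2 (b - a) (c - b) < 0 \<and> cross2 (c - b) (d - c) < 0 \<and>
     cross2 (d - c) (a - d) < 0 \<and> cross2 (a - d) (b - a) < 0"

end

theory Submission
  imports Defs
begin

text \<open>Put a at the origin and c at (1, 0), so that b = (u, h) and d = (v, -k) with h, k > 0 and
  h + k = W; the diameter bound on bd gives (u - v)^2 + W^2 \<le> 1, hence |u - v| < 1/2.
  Let S = sqrt (1 + 5 W^2). If k \<ge> S/4, the triangle acd has all sides at least S/4.
  Otherwise h > W - S/4, and when u \<le> v and u + v \<le> 1 the triangle formed by b, c and the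
  midpoint of ad has all sides at least S/4. The reflection in the line ac and the
  half-turn about the midpoint of ac reduce every position of b and d to this one.\<close>

definition has_triangle_min_side_ge :: "'a::real_normed_vector set \<Rightarrow> real \<Rightarrow> bool" where
  "has_triangle_min_side_ge H T \<longleftrightarrow>
     (\<exists>p q r. \<not> collinear {p, q, r} \<and> convex hull {p, q, r} \<subseteq> H \<and>
        min (dist p q) (min (dist q r) (dist r p)) \<ge> T)"

lemma collinear_imp_cross2_eq_0:
  fixes p q r :: "real \<times> real"
  assumes "collinear {p, q, r}"
  shows "cross2 (q - p) (r - p) = 0"
proof -
  obtain w where w: "\<forall>x\<in>{p, q, r}. \<forall>y\<in>{p, q, r}. \<exists>c. x - y = c *\<^sub>R w"
    using assms unfolding collinear_def by blast
  obtain c1 c2 where "q - p = c1 *\<^sub>R w" "r - p = c2 *\<^sub>R w"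
    using w by blast
  then show ?thesis
    unfolding cross2_def by (simp add: algebra_simps)
qed

lemma has_triangle_min_side_geI:
  fixes p q r :: "real \<times> real"
  assumes "convex H" "p \<in> H" "q \<in> H" "r \<in> H" "cross2 (q - p) (r - p) \<noteq> 0"
    and "T \<le> dist p q" "T \<le> dist q r" "T \<le> dist r p"
  shows "has_triangle_min_side_ge H T"
  unfolding has_triangle_min_side_ge_def
proof (intro exI conjI)
  show "\<not> collinear {p, q, r}"
    using collinear_imp_cross2_eq_0 assms(5) by blast
  show "convex hull {p, q, r} \<subseteq> H"
    using assms(1-4) by (intro hull_minimal) auto
qed (use assms(6-8) in simp)

lemma sqrt_le_dist_Pair:
  fixes x1 y1 x2 y2 s :: real
  assumes "s \<le> (x1 - x2)^2 + (y1 - y2)^2"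
  shows "sqrt s \<le> dist (x1, y1) (x2, y2)"
  using assms by (simp add: dist_Pair_Pair dist_real_def)

lemma convex_hull_affine_image:
  assumes "linear g" "\<And>x. f x = t + g x"
  shows "f ` (convex hull S) = convex hull (f ` S)"
proof -
  have f: "f = (\<lambda>x. t + x) \<circ> g"
    using assms(2) by auto
  show ?thesis
    unfolding f image_comp[symmetric]
    by (simp add: convex_hull_translation convex_hull_linear_image[OF assms(1)])
qed

lemma collinear_affine_image_imp:
  fixes g :: "'a::real_vector \<Rightarrow> 'a"
  assumes g: "linear g" "\<And>x. g (g x) = x" and f: "\<And>x. f x = t + g x"
    and "collinear (f ` S)"
  shows "collinear S"
proof -
  obtain w where w: "\<And>x y. x \<in> S \<Longrightarrow> y \<in> S \<Longrightarrow> \<exists>c. f x - f y = c *\<^sub>R w"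
    using assms(4) unfolding collinear_def by blast
  have "\<exists>c. x - y = c *\<^sub>R g w" if xy: "x \<in> S" "y \<in> S" for x y
  proof -
    obtain c where "g (x - y) = c *\<^sub>R w"
      using w[OF xy] by (auto simp: f linear_diff[OF g(1)])
    then have "g (g (x - y)) = c *\<^sub>R g w"
      by (simp add: linear_scale[OF g(1)])
    then show ?thesis
      using g(2) by auto
  qed
  then show ?thesis
    unfolding collinear_def by blast
qed

lemma has_triangle_min_side_ge_isometric_image:
  fixes g :: "'a::real_normed_vector \<Rightarrow> 'a"
  assumes g: "linear g" "\<And>x. g (g x) = x" "\<And>x. norm (g x) = norm x"
    and f: "\<And>x. f x = t + g x"
    and "has_triangle_min_side_ge H T"
  shows "has_triangle_min_side_ge (f ` H) T"
proof -
  obtain p q r where nc: "\<not> collinear {p, q, r}" and sub: "convex hull {p, q, r} \<subseteq> H"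
    and sides: "min (dist p q) (min (dist q r) (dist r p)) \<ge> T"
    using assms(5) unfolding has_triangle_min_side_ge_def by blast
  have dist: "dist (f x) (f y) = dist x y" for x y
    by (simp add: f dist_norm linear_diff[OF g(1), symmetric] g(3))
  have "\<not> collinear (f ` {p, q, r})"
    using collinear_affine_image_imp[OF g(1,2) f] nc by blast
  moreover have "convex hull (f ` {p, q, r}) \<subseteq> f ` H"
    by (metis convex_hull_affine_image[OF g(1) f] image_mono sub)
  ultimately show ?thesis
    unfolding has_triangle_min_side_ge_def using sides
    by (intro exI[of _ "f p"] exI[of _ "f q"] exI[of _ "f r"]) (simp add: dist)
qed

definition normal_quad :: "real \<Rightarrow> real \<Rightarrow> real \<Rightarrow> real \<Rightarrow> (real \<times> real) set" where
  "normal_quad u h v k = convex hull {(0, 0), (u, h), (1, 0), (v, - k)}"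

text \<open>The right-hand sides are the squared sides of the triangle with vertices (u, h), (1, 0)
  and (v/2, -k/2).\<close>

lemma midpoint_triangle_side_bounds:
  fixes u v h k :: real
  assumes "h + k = W" "0 < h" "0 \<le> k" "(u - v)^2 + W^2 \<le> 1" "u \<le> v" "u + v \<le> 1"
    and "4 < 5 * W^2" "16 * k^2 < 1 + 5 * W^2"
  shows "(1 + 5 * W^2) / 16 \<le> (1 - u)^2 + h^2"
    and "(1 + 5 * W^2) / 16 \<le> (u - v / 2)^2 + (h + k / 2)^2"
    and "(1 + 5 * W^2) / 16 \<le> (1 - v / 2)^2 + (k / 2)^2"
proof -
  define S where "S = sqrt (1 + 5 * W^2)"
  have S: "S^2 = 1 + 5 * W^2" "0 \<le> S"
    by (simp_all add: S_def)
  have W: "0 < W" "W^2 \<le> 1"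
    using assms(2-4) by (auto simp: assms(1)[symmetric] intro: order_trans[rotated])
  have "(v - u)^2 < (1/2)^2"
    using assms(4,7) by (simp add: power2_commute power_divide)
  then have "v - u < 1/2"
    by (rule power2_less_imp_less) simp
  then have u: "u \<le> 1/2" and v: "v \<le> 3/4"
    using assms(5,6) by linarith+
  have "(4 * k)^2 < S^2"
    using assms(8) S(1) by simp
  then have k: "4 * k < S"
    using S(2) by (rule power2_less_imp_less)
  have WS: "W * S \<le> 2 * W^2 + 1/2"
  proof (rule power2_le_imp_le)
    have "W^2 * W^2 \<le> W^2"
      using mult_left_le[OF W(2), of "W^2"] by simp
    moreover have "(W * S)^2 = W^2 + 5 * (W^2 * W^2)"
      by (simp add: power_mult_distrib S(1) algebra_simps)
    moreover have "(2 * W^2 + 1/2)^2 = 4 * (W^2 * W^2) + 2 * W^2 + 1/4"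
      by (simp add: power2_eq_square algebra_simps)
    ultimately show "(W * S)^2 \<le> (2 * W^2 + 1/2)^2"
      by linarith
  qed simp
  have "S \<le> 4 * W"
    by (rule power2_le_imp_le) (use S(1) W(1) assms(7) in auto)
  have "3 * S \<le> 8 * W"
    by (rule power2_le_imp_le) (use S(1) W(1) assms(7) in \<open>auto simp: power_mult_distrib\<close>)
  have "(W - S / 4)^2 \<le> h^2"
    using k \<open>S \<le> 4 * W\<close> by (intro power_mono) (auto simp: assms(1)[symmetric])
  moreover have "(1/2)^2 \<le> (1 - u)^2"
    using u by (intro power_mono) auto
  ultimately show "(1 + 5 * W^2) / 16 \<le> (1 - u)^2 + h^2"
    using WS S(1) by (simp add: power2_diff power_divide field_simps)
  have "(S / 4)^2 \<le> (h + k / 2)^2"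
    using k \<open>3 * S \<le> 8 * W\<close> S(2) by (intro power_mono) (auto simp: assms(1)[symmetric])
  then show "(1 + 5 * W^2) / 16 \<le> (u - v / 2)^2 + (h + k / 2)^2"
    using S(1) by (simp add: power_divide add_increasing)
  have "(5/8)^2 \<le> (1 - v / 2)^2"
    using v by (intro power_mono) auto
  then show "(1 + 5 * W^2) / 16 \<le> (1 - v / 2)^2 + (k / 2)^2"
    using W(2) by (simp add: power_divide add_increasing2)
qed

lemma normal_quad_has_triangle_base:
  fixes u v h k :: real
  assumes "h + k = W" "0 < h" "0 < k" "0 \<le> u" "u \<le> v" "u + v \<le> 1" "(u - v)^2 + W^2 \<le> 1"
    and "4 < 5 * W^2"
  shows "has_triangle_min_side_ge (normal_quad u h v k) (sqrt ((1 + 5 * W^2) / 16))"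
proof -
  let ?H = "normal_quad u h v k" and ?T = "(1 + 5 * W^2) / 16"
  have "convex ?H"
    by (simp add: normal_quad_def)
  have vertices: "(0, 0) \<in> ?H" "(u, h) \<in> ?H" "(1, 0) \<in> ?H" "(v, - k) \<in> ?H"
    by (simp_all add: normal_quad_def hull_inc)
  have "W^2 \<le> 1"
    using assms(7) zero_le_power2[of "u - v"] by linarith
  show ?thesis
  proof (cases "?T \<le> k^2")
    case True
    show ?thesis
    proof (rule has_triangle_min_side_geI[OF \<open>convex ?H\<close> vertices(1,3,4)])
      show "cross2 ((1, 0) - (0, 0)) ((v, - k) - (0, 0)) \<noteq> 0"
        using assms(3) by (simp add: cross2_def)
      show "sqrt ?T \<le> dist (0, 0) (1 :: real, 0 :: real)"
        by (rule sqrt_le_dist_Pair) (use \<open>W^2 \<le> 1\<close> in \<open>simp add: field_simps\<close>)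
      show "sqrt ?T \<le> dist (1, 0) (v, - k)"
        by (rule sqrt_le_dist_Pair) (use True in \<open>simp add: add_increasing\<close>)
      show "sqrt ?T \<le> dist (v, - k) (0, 0)"
        by (rule sqrt_le_dist_Pair) (use True in \<open>simp add: add_increasing\<close>)
    qed
  next
    case False
    then have "16 * k^2 < 1 + 5 * W^2"
      by simp
    note bounds = midpoint_triangle_side_bounds[OF assms(1,2) less_imp_le[OF assms(3)] assms(7,5,6,8) this]
    have "(v / 2, - k / 2) \<in> ?H"
      using convexD[OF \<open>convex ?H\<close> vertices(1,4), of "1/2" "1/2"] by simp
    show ?thesis
    proof (rule has_triangle_min_side_geI[OF \<open>convex ?H\<close> vertices(2,3) \<open>(v / 2, - k / 2) \<in> ?H\<close>])
      have "0 \<le> (1 - u) * k" "0 < h * (1 - v / 2)"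
        using assms(2-6) by simp_all
      moreover have "cross2 ((1, 0) - (u, h)) ((v / 2, - k / 2) - (u, h)) =
          - ((1 - u) * k / 2) - h * (1 - v / 2)"
        by (simp add: cross2_def algebra_simps)
      ultimately show "cross2 ((1, 0) - (u, h)) ((v / 2, - k / 2) - (u, h)) \<noteq> 0"
        by linarith
      show "sqrt ?T \<le> dist (u, h) (1, 0)"
        by (rule sqrt_le_dist_Pair) (use bounds(1) in \<open>simp add: power2_commute\<close>)
      show "sqrt ?T \<le> dist (1, 0) (v / 2, - k / 2)"
        by (rule sqrt_le_dist_Pair) (use bounds(3) in simp)
      show "sqrt ?T \<le> dist (v / 2, - k / 2) (u, h)"
        by (rule sqrt_le_dist_Pair) (use bounds(2) in \<open>simp add: power2_commute\<close>)
    qed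
  qed
qed

lemma normal_quad_reflect:
  "normal_quad v k u h = (\<lambda>p. (fst p, - snd p)) ` normal_quad u h v k"
proof -
  have "linear (\<lambda>p :: real \<times> real. (fst p, - snd p))"
    by (rule linearI) auto
  then show ?thesis
    unfolding normal_quad_def
    by (simp add: convex_hull_linear_image insert_commute)
qed

lemma normal_quad_half_turn:
  "normal_quad (1 - v) k (1 - u) h = (\<lambda>p. (1, 0) - p) ` normal_quad u h v k"
  unfolding normal_quad_def
  by (subst convex_hull_affine_image[OF linear_uminus, of _ "(1, 0)"])
    (simp_all add: insert_commute zero_prod_def)

lemma normal_quad_has_triangle_le:
  fixes u v h k :: real
  assumes "h + k = W" "0 < h" "0 < k" "0 \<le> u" "u \<le> v" "v \<le> 1" "(u - v)^2 + W^2 \<le> 1"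
    and "4 < 5 * W^2"
  shows "has_triangle_min_side_ge (normal_quad u h v k) (sqrt ((1 + 5 * W^2) / 16))"
proof (cases "u + v \<le> 1")
  case True
  then show ?thesis
    using normal_quad_has_triangle_base assms by blast
next
  case False
  have "has_triangle_min_side_ge (normal_quad (1 - v) k (1 - u) h) (sqrt ((1 + 5 * W^2) / 16))"
    using assms False
    by (intro normal_quad_has_triangle_base) (auto simp: power2_commute)
  moreover have "linear (uminus :: real \<times> real \<Rightarrow> real \<times> real)"
    by (rule linear_uminus)
  ultimately have "has_triangle_min_side_ge ((\<lambda>p. (1, 0) - p) ` normal_quad (1 - v) k (1 - u) h)
      (sqrt ((1 + 5 * W^2) / 16))"
    by (intro has_triangle_min_side_ge_isometric_image[where g = uminus and t = "(1, 0)"]) auto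
  then show ?thesis
    by (simp add: normal_quad_half_turn image_image)
qed

lemma normal_quad_has_triangle:
  fixes u v h k :: real
  assumes "h + k = W" "0 < h" "0 < k" "0 \<le> u" "u \<le> 1" "0 \<le> v" "v \<le> 1"
    and "(u - v)^2 + W^2 \<le> 1" "4 < 5 * W^2"
  shows "has_triangle_min_side_ge (normal_quad u h v k) (sqrt ((1 + 5 * W^2) / 16))"
proof (cases "u \<le> v")
  case True
  then show ?thesis
    using normal_quad_has_triangle_le assms by blast
next
  case False
  have "has_triangle_min_side_ge (normal_quad v k u h) (sqrt ((1 + 5 * W^2) / 16))"
    using assms False
    by (intro normal_quad_has_triangle_le) (auto simp: power2_commute)
  moreover have "linear (\<lambda>p :: real \<times> real. (fst p, - snd p))"
    by (rule linearI) auto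
  ultimately have "has_triangle_min_side_ge ((\<lambda>p. (fst p, - snd p)) ` normal_quad v k u h)
      (sqrt ((1 + 5 * W^2) / 16))"
    by (intro has_triangle_min_side_ge_isometric_image[where t = 0]) (auto simp: norm_Pair)
  then show ?thesis
    by (simp add: normal_quad_reflect[of u h v k] image_image)
qed

lemma convex_hull_quad_eq_translated_normal_quad:
  fixes a b c d :: "real \<times> real"
  assumes "c = a + (1, 0)"
  shows "convex hull {a, b, c, d} = (\<lambda>p. a + p) `
    normal_quad (fst b - fst a) (snd b - snd a) (fst d - fst a) (snd a - snd d)"
proof -
  have "{a, b, c, d} =
      (\<lambda>p. a + p) ` {(0, 0), (fst b - fst a, snd b - snd a), (1, 0), (fst d - fst a, - (snd a - snd d))}"
  proof -
    have "a + (0, 0) = a" "a + (fst b - fst a, snd b - snd a) = b"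
      "a + (fst d - fst a, - (snd a - snd d)) = d"
      by (simp_all add: prod_eq_iff)
    then show ?thesis
      using assms by simp
  qed
  then show ?thesis
    unfolding normal_quad_def by (simp only: convex_hull_translation)
qed

theorem theorem2:
  fixes a b c d :: "real \<times> real" and W :: real
  assumes quad: "convex_quad_cw a b c d"
    and horiz: "snd a = snd c"
    and ac: "dist a c = 1"
    and diam: "diameter (convex hull {a, b, c, d}) = 1"
    and left: "\<forall>v\<in>{a, b, c, d}. fst a \<le> fst v"
    and right: "\<forall>v\<in>{a, b, c, d}. fst v \<le> fst c"
    and top: "\<forall>v\<in>{a, b, c, d}. snd v \<le> snd b"
    and bottom: "\<forall>v\<in>{a, b, c, d}. snd d \<le> snd v"
    and width: "fst c - fst a = 1"
    and height: "snd b - snd d = W"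
    and W: "2 / sqrt 5 < W" "W \<le> 1"
  shows "\<exists>p q r. \<not> collinear {p, q, r} \<and> convex hull {p, q, r} \<subseteq> convex hull {a, b, c, d} \<and>
           min (dist p q) (min (dist q r) (dist r p)) \<ge> sqrt (1 + 5 * W\<^sup>2) / 4"
proof -
  define u h v k where "u = fst b - fst a" and "h = snd b - snd a"
    and "v = fst d - fst a" and "k = snd a - snd d"
  have "c = a + (1, 0)"
    using width horiz by (simp add: prod_eq_iff)
  then have hull: "convex hull {a, b, c, d} = (\<lambda>p. a + p) ` normal_quad u h v k"
    unfolding u_def h_def v_def k_def by (rule convex_hull_quad_eq_translated_normal_quad)
  have "dist b d \<le> 1"
    using diameter_bounded_bound[of "convex hull {a, b, c, d}" b d] diam
    by (simp add: finite_imp_bounded_convex_hull hull_inc)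
  moreover have "2\<^sup>2 < (W * sqrt 5)\<^sup>2"
    using W(1) by (intro power_strict_mono) (auto simp: divide_less_eq mult.commute)
  \<comment> \<open>Convexity at b and d gives h, k > 0, the bounding box gives u, v \<in> [0, 1], and
    dist b d \<le> 1 gives (u - v)^2 + W^2 \<le> 1.\<close>
  ultimately have "has_triangle_min_side_ge (normal_quad u h v k) (sqrt ((1 + 5 * W\<^sup>2) / 16))"
    using quad horiz width left right height
    by (intro normal_quad_has_triangle)
      (auto simp: u_def h_def v_def k_def convex_quad_cw_def cross2_def dist_prod_def
        dist_real_def power_mult_distrib algebra_simps)
  then have "has_triangle_min_side_ge (convex hull {a, b, c, d}) (sqrt ((1 + 5 * W\<^sup>2) / 16))"
    unfolding hull by (intro has_triangle_min_side_ge_isometric_image[where g = id]) (auto simp: linear_id)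
  moreover have "sqrt ((1 + 5 * W\<^sup>2) / 16) = sqrt (1 + 5 * W\<^sup>2) / 4"
    by (simp add: real_sqrt_divide real_sqrt_unique[of 4 16])
  ultimately show ?thesis
    unfolding has_triangle_min_side_ge_def by simp
qed

end
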